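(* Let $\Gamma,\Delta$ be finite multisets of formulas with $\vdash_{\mathsf{GT}}\Gamma\Rightarrow\Delta$. Then for every pair of partitions $\Gamma=\Gamma_1,\Gamma_2$ and $\Delta=\Lambda_1,\Delta_2$ (as multiset unions) such that $\Lambda_1$ consists of classical formulas, there is a sequent interpolant $\phi$ of the partition sequent $\Gamma_1;\Gamma_2\Rightarrow\Lambda_1;\Delta_2$; moreover, if $\Delta_2$ consists of classical formulas, then $\phi$ can be taken to be classical.
   Context: Fix a countably infinite set $\mathsf{Prop}$ of propositional variables. Classical formulas are generated by $\alpha ::= p \mid \bot \mid \neg\alpha \mid \alpha\wedge\alpha \mid \alpha\vee\alpha$ with $p\in\mathsf{Prop}$. Formulas are generated by $\phi ::= \alpha \mid \phi\wedge\phi \mid \phi\vee\phi \mid \phi\mathbin{\backslash\!\!/}\phi$ where $\alpha$ is classical ($\vee$: split disjunction, $\mathbin{\backslash\!\!/}$: inquisitive disjunction). A sequent is $\Gamma\Rightarrow\Delta$ with $\Gamma,\Delta$ finite multisets of formulas; "$\Gamma,\Delta$" is multiset union. Polarity: an occurrence of a propositional variable in $\phi$ is positive (negative) if it lies in the scope of an even (odd) number of negations. $\mathsf{P}^+(\phi)$ ($\mathsf{P}^-(\phi)$) is the set of variables having a positive (negative) occurrence in $\phi$, and $\mathsf{P}^i(\Gamma)=\bigcup_{\phi\in\Gamma}\mathsf{P}^i(\phi)$. A partition sequent $\Gamma_1;\Gamma_2\Rightarrow\Delta_1;\Delta_2$ is an expression such that $\Gamma_1,\Gamma_2\Rightarrow\Delta_1,\Delta_2$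 is a sequent. A formula $\phi$ is a sequent interpolant of it if (i) $\vdash_{\mathsf{GT}^-}\Gamma_1\Rightarrow\Delta_1,\phi$ and $\vdash_{\mathsf{GT}^-}\Gamma_2,\phi\Rightarrow\Delta_2$; and (ii) $\mathsf{P}^i(\phi)\subseteq(\mathsf{P}^i(\Gamma_1)\cup\mathsf{P}^j(\Delta_1))\cap(\mathsf{P}^j(\Gamma_2)\cup\mathsf{P}^i(\Delta_2))$ for $i\in\{+,-\}$ and $j$ the other element of $\{+,-\}$. Deep-inference notation: for a formula $\chi$ with a designated occurrence of a subformula not in the scope of any negation, $\chi\{\eta\}$ denotes the result of replacing that occurrence by $\eta$. The calculus $\mathsf{GT}$ ($\alpha$ ranges over classical formulas, $\Lambda$ over multisets of classical formulas): axioms $\Gamma,p\Rightarrow p,\Delta$ and $\Gamma,\bot\Rightarrow\Delta$; (L$\neg$) from $\Gamma\Rightarrow\alpha,\Delta$ infer $\Gamma,\neg\alpha\Rightarrow\Delta$; (R$\neg$) from $\Gamma,\alpha\Rightarrow\Delta$ infer $\Gamma\Rightarrow\neg\alpha,\Delta$; (L$\wedge$) from $\Gamma,\phi,\psi\Rightarrow\Delta$ infer $\Gamma,\phi\wedge\psi\Rightarrow\Delta$; (R$\wedge$) from $\Gamma\Rightarrow\phi,\Lambda$ and $\Gamma\Rightarrow\psi,\Lambda$ infer $\Gamma\Rightarrow\phi\wedge\psi,\Lambda,\Delta$; (L$\vee$) from $\Gamma,\phi\Rightarrow\Lambda$ and $\Gamma,\psi\Rightarrow\Lambda$ infer $\Gamma,\phi\vee\psi\Rightarrow\Lambda,\Delta$;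 (R$\vee$) from $\Gamma\Rightarrow\phi,\psi,\Delta$ infer $\Gamma\Rightarrow\phi\vee\psi,\Delta$; (L$\mathbin{\backslash\!\!/}$) from $\Gamma,\chi\{\phi_L\}\Rightarrow\Delta$ and $\Gamma,\chi\{\phi_R\}\Rightarrow\Delta$ infer $\Gamma,\chi\{\phi_L\mathbin{\backslash\!\!/}\phi_R\}\Rightarrow\Delta$; (R$\mathbin{\backslash\!\!/}$) from $\Gamma\Rightarrow\chi\{\phi_i\},\Delta$ ($i\in\{L,R\}$) infer $\Gamma\Rightarrow\chi\{\phi_L\mathbin{\backslash\!\!/}\phi_R\},\Delta$; (Cut) from $\Gamma\Rightarrow\phi,\Delta$ and $\Pi,\phi\Rightarrow\Sigma$ infer $\Pi,\Gamma\Rightarrow\Delta,\Sigma$. $\mathsf{GT}^-$ is $\mathsf{GT}$ without (Cut). *)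

theory Defs
  imports Main "HOL-Library.Multiset"
begin

datatype fm =
    Var nat
  | Bot
  | Neg fm
  | Conj fm fm
  | Disj fm fm       (* split disjunction \<or> *)
  | IDisj fm fm      (* inquisitive disjunction *)

fun classical :: "fm \<Rightarrow> bool" where
  "classical (Var p) = True"
| "classical Bot = True"
| "classical (Neg a) = classical a"
| "classical (Conj a b) = (classical a \<and> classical b)"
| "classical (Disj a b) = (classical a \<and> classical b)"
| "classical (IDisj a b) = False"

fun wff :: "fm \<Rightarrow> bool" where
  "wff (Var p) = True"
| "wff Bot = True"
| "wff (Neg a) = classical a"
| "wff (Conj a b) = (wff a \<and> wff b)"
| "wff (Disj a b) = (wff a \<and> wff b)"
| "wff (IDisj a b) = (wff a \<and> wff b)"

(* polarity: pvars True = P^+, pvars False = P^- *)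
fun pvars :: "bool \<Rightarrow> fm \<Rightarrow> nat set" where
  "pvars b (Var p) = (if b then {p} else {})"
| "pvars b Bot = {}"
| "pvars b (Neg a) = pvars (\<not> b) a"
| "pvars b (Conj x y) = pvars b x \<union> pvars b y"
| "pvars b (Disj x y) = pvars b x \<union> pvars b y"
| "pvars b (IDisj x y) = pvars b x \<union> pvars b y"

definition mpvars :: "bool \<Rightarrow> fm multiset \<Rightarrow> nat set" where
  "mpvars b \<Gamma> = (\<Union>\<phi>\<in>set_mset \<Gamma>. pvars b \<phi>)"

(* deep-inference contexts: a hole not in the scope of any negation *)
datatype ctx =
    Hole
  | CConjL ctx fm | CConjR fm ctx
  | CDisjL ctx fm | CDisjR fm ctx
  | CIDisjL ctx fm | CIDisjR fm ctx

fun fill :: "ctx \<Rightarrow> fm \<Rightarrow> fm" where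
  "fill Hole e = e"
| "fill (CConjL c x) e = Conj (fill c e) x"
| "fill (CConjR x c) e = Conj x (fill c e)"
| "fill (CDisjL c x) e = Disj (fill c e) x"
| "fill (CDisjR x c) e = Disj x (fill c e)"
| "fill (CIDisjL c x) e = IDisj (fill c e) x"
| "fill (CIDisjR x c) e = IDisj x (fill c e)"

definition wffs :: "fm multiset \<Rightarrow> bool" where
  "wffs M = (\<forall>\<phi>\<in>#M. wff \<phi>)"

definition classicals :: "fm multiset \<Rightarrow> bool" where
  "classicals M = (\<forall>\<phi>\<in>#M. classical \<phi>)"

(* The calculus GT.  gt True = GT (with Cut), gt False = GT^- (cut-free).
   Sequents consist of well-formed formulas; side formulas that are
   introduced by a rule are required to be well-formed. *)
inductive gt :: "bool \<Rightarrow> fm multiset \<Rightarrow> fm multiset \<Rightarrow> bool" where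
  ax: "wffs \<Gamma> \<Longrightarrow> wffs \<Delta> \<Longrightarrow> gt c (\<Gamma> + {#Var p#}) ({#Var p#} + \<Delta>)"
| axBot: "wffs \<Gamma> \<Longrightarrow> wffs \<Delta> \<Longrightarrow> gt c (\<Gamma> + {#Bot#}) \<Delta>"
| LNeg: "classical \<alpha> \<Longrightarrow> gt c \<Gamma> ({#\<alpha>#} + \<Delta>) \<Longrightarrow> gt c (\<Gamma> + {#Neg \<alpha>#}) \<Delta>"
| RNeg: "classical \<alpha> \<Longrightarrow> gt c (\<Gamma> + {#\<alpha>#}) \<Delta> \<Longrightarrow> gt c \<Gamma> ({#Neg \<alpha>#} + \<Delta>)"
| LConj: "gt c (\<Gamma> + {#\<phi>, \<psi>#}) \<Delta> \<Longrightarrow> gt c (\<Gamma> + {#Conj \<phi> \<psi>#}) \<Delta>"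
| RConj: "classicals \<Lambda> \<Longrightarrow> wffs \<Delta> \<Longrightarrow> gt c \<Gamma> ({#\<phi>#} + \<Lambda>) \<Longrightarrow> gt c \<Gamma> ({#\<psi>#} + \<Lambda>)
          \<Longrightarrow> gt c \<Gamma> ({#Conj \<phi> \<psi>#} + \<Lambda> + \<Delta>)"
| LDisj: "classicals \<Lambda> \<Longrightarrow> wffs \<Delta> \<Longrightarrow> gt c (\<Gamma> + {#\<phi>#}) \<Lambda> \<Longrightarrow> gt c (\<Gamma> + {#\<psi>#}) \<Lambda>
          \<Longrightarrow> gt c (\<Gamma> + {#Disj \<phi> \<psi>#}) (\<Lambda> + \<Delta>)"
| RDisj: "gt c \<Gamma> ({#\<phi>, \<psi>#} + \<Delta>) \<Longrightarrow> gt c \<Gamma> ({#Disj \<phi> \<psi>#} + \<Delta>)"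
| LIDisj: "gt c (\<Gamma> + {#fill \<chi> \<phi>L#}) \<Delta> \<Longrightarrow> gt c (\<Gamma> + {#fill \<chi> \<phi>R#}) \<Delta>
          \<Longrightarrow> gt c (\<Gamma> + {#fill \<chi> (IDisj \<phi>L \<phi>R)#}) \<Delta>"
| RIDisjL: "wff \<phi>R \<Longrightarrow> gt c \<Gamma> ({#fill \<chi> \<phi>L#} + \<Delta>)
          \<Longrightarrow> gt c \<Gamma> ({#fill \<chi> (IDisj \<phi>L \<phi>R)#} + \<Delta>)"
| RIDisjR: "wff \<phi>L \<Longrightarrow> gt c \<Gamma> ({#fill \<chi> \<phi>R#} + \<Delta>)
          \<Longrightarrow> gt c \<Gamma> ({#fill \<chi> (IDisj \<phi>L \<phi>R)#} + \<Delta>)"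
| Cut: "c \<Longrightarrow> gt c \<Gamma> ({#\<phi>#} + \<Delta>) \<Longrightarrow> gt c (\<Pi> + {#\<phi>#}) \<Sigma>
          \<Longrightarrow> gt c (\<Pi> + \<Gamma>) (\<Delta> + \<Sigma>)"

abbreviation GT :: "fm multiset \<Rightarrow> fm multiset \<Rightarrow> bool" where
  "GT \<equiv> gt True"

abbreviation GTminus :: "fm multiset \<Rightarrow> fm multiset \<Rightarrow> bool" where
  "GTminus \<equiv> gt False"

definition seq_interpolant ::
  "fm multiset \<Rightarrow> fm multiset \<Rightarrow> fm multiset \<Rightarrow> fm multiset \<Rightarrow> fm \<Rightarrow> bool" where
  "seq_interpolant G1 G2 D1 D2 \<phi> \<longleftrightarrow>
     wff \<phi> \<and>
     GTminus G1 (D1 + {#\<phi>#}) \<and> GTminus (G2 + {#\<phi>#}) D2 \<and>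
     (\<forall>i. pvars i \<phi> \<subseteq> (mpvars i G1 \<union> mpvars (\<not> i) D1) \<inter> (mpvars (\<not> i) G2 \<union> mpvars i D2))"

end

theory Submission
  imports Defs
begin

(*
  The proof is semantic. A resolution of a formula picks one disjunct of each of its
  inquisitive disjunctions; call \<Gamma> \<Rightarrow> \<Delta> valid if every resolution of \<Gamma> classically
  entails the disjunction of some resolution of \<Delta>. Every rule of GT, Cut included, preserves
  validity. Conversely every valid sequent is provable in GT\<^sup>-: the cut-free calculus is
  complete for classical sequents, and its rules for inquisitive disjunction pass between a
  formula and its resolutions.

  It therefore suffices to find \<phi> semantically. For a resolution A of \<Gamma>1, let \<theta>\<^sub>A be the
  disjunction of the minterms, over the shared variables in their admissible polarities, of the
  valuations that satisfy A and falsify \<Lambda>1. Then A entails \<Lambda>1, \<theta>\<^sub>A; and \<theta>\<^sub>A together with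
  any resolution of \<Gamma>2 entails some resolution of \<Delta>2, because a countermodel of A, \<Lambda>1 can be
  glued along the shared variables to any model of \<theta>\<^sub>A and of that resolution. The inquisitive
  disjunction of the finitely many \<theta>\<^sub>A is an interpolant; when \<Delta>2 is classical it is its own
  unique resolution, and the split disjunction of the \<theta>\<^sub>A is one.
*)

section \<open>Resolution semantics\<close>

fun sat :: "(nat \<Rightarrow> bool) \<Rightarrow> fm \<Rightarrow> bool" where
  "sat v (Var p) = v p"
| "sat v Bot = False"
| "sat v (Neg a) = (\<not> sat v a)"
| "sat v (Conj a b) = (sat v a \<and> sat v b)"
| "sat v (Disj a b) = (sat v a \<or> sat v b)"
| "sat v (IDisj a b) = (sat v a \<or> sat v b)"

lemma sat_mono:
  assumes "\<forall>p\<in>pvars True f. v p \<longrightarrow> u p" and "\<forall>p\<in>pvars False f. u p \<longrightarrow> v p"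
    and "sat v f"
  shows "sat u f"
  using assms
proof (induction f arbitrary: v u)
  case (Neg f)
  then show ?case using Neg.IH[of u v] by auto
next
  case (Conj f1 f2)
  then show ?case using Conj.IH[of v u] by auto
next
  case (Disj f1 f2)
  then show ?case using Disj.IH[of v u] by auto
next
  case (IDisj f1 f2)
  then show ?case using IDisj.IH[of v u] by auto
qed auto

lemma classical_imp_wff: "classical f \<Longrightarrow> wff f"
  by (induction f) auto

lemma finite_pvars: "finite (pvars b f)"
  by (induction f arbitrary: b) auto

lemma mpvars_simps [simp]:
  "mpvars b {#} = {}"
  "mpvars b (add_mset x M) = pvars b x \<union> mpvars b M"
  "mpvars b (M + N) = mpvars b M \<union> mpvars b N"
  by (auto simp: mpvars_def)

lemma finite_mpvars: "finite (mpvars b M)"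
  by (simp add: mpvars_def finite_pvars)

lemma pvars_subset_mpvars: "f \<in># M \<Longrightarrow> pvars b f \<subseteq> mpvars b M"
  by (auto simp: mpvars_def)

lemma wffs_simps [simp]:
  "wffs {#}"
  "wffs (add_mset x M) \<longleftrightarrow> wff x \<and> wffs M"
  "wffs (M + N) \<longleftrightarrow> wffs M \<and> wffs N"
  by (auto simp: wffs_def)

lemma classicals_simps [simp]:
  "classicals {#}"
  "classicals (add_mset x M) \<longleftrightarrow> classical x \<and> classicals M"
  "classicals (M + N) \<longleftrightarrow> classicals M \<and> classicals N"
  by (auto simp: classicals_def)

lemma classicals_imp_wffs: "classicals M \<Longrightarrow> wffs M"
  by (auto simp: classicals_def wffs_def classical_imp_wff)

fun resolutions :: "fm \<Rightarrow> fm set" where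
  "resolutions (Var p) = {Var p}"
| "resolutions Bot = {Bot}"
| "resolutions (Neg a) = {Neg a}"
| "resolutions (Conj a b) = {Conj x y | x y. x \<in> resolutions a \<and> y \<in> resolutions b}"
| "resolutions (Disj a b) = {Disj x y | x y. x \<in> resolutions a \<and> y \<in> resolutions b}"
| "resolutions (IDisj a b) = resolutions a \<union> resolutions b"

lemma resolutions_nonempty: "\<exists>x. x \<in> resolutions f"
  by (induction f) auto

lemma resolutions_classical: "classical f \<Longrightarrow> resolutions f = {f}"
  by (induction f) auto

lemma classical_resolution: "wff f \<Longrightarrow> x \<in> resolutions f \<Longrightarrow> classical x"
  by (induction f arbitrary: x) auto

lemma pvars_resolution: "x \<in> resolutions f \<Longrightarrow> pvars b x \<subseteq> pvars b f"
  by (induction f arbitrary: x) fastforce+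

lemma resolutions_fill_IDisj:
  "resolutions (fill \<chi> (IDisj a b)) = resolutions (fill \<chi> a) \<union> resolutions (fill \<chi> b)"
  by (induction \<chi>) auto

abbreviation resolves :: "fm multiset \<Rightarrow> fm multiset \<Rightarrow> bool" where
  "resolves \<equiv> rel_mset (\<lambda>f a. a \<in> resolutions f)"

lemma resolves_add_mset_iff:
  "resolves (add_mset x M) N \<longleftrightarrow> (\<exists>a N'. N = add_mset a N' \<and> a \<in> resolutions x \<and> resolves M N')"
  by (metis msed_rel_invL rel_mset_Plus)

lemma resolves_plus_iff:
  "resolves (M1 + M2) N \<longleftrightarrow> (\<exists>N1 N2. N = N1 + N2 \<and> resolves M1 N1 \<and> resolves M2 N2)"
proof (induction M2 arbitrary: N)
  case (add x M2)
  have "resolves (M1 + add_mset x M2) N \<longleftrightarrow>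
    (\<exists>a N1 N2. N = add_mset a (N1 + N2) \<and> a \<in> resolutions x \<and> resolves M1 N1 \<and> resolves M2 N2)"
    by (auto simp: resolves_add_mset_iff add.IH)
  also have "\<dots> \<longleftrightarrow> (\<exists>N1 N2. N = N1 + N2 \<and> resolves M1 N1 \<and> resolves (add_mset x M2) N2)"
  proof
    assume "\<exists>a N1 N2. N = add_mset a (N1 + N2) \<and> a \<in> resolutions x \<and> resolves M1 N1 \<and> resolves M2 N2"
    then obtain a N1 N2 where "N = add_mset a (N1 + N2)" "a \<in> resolutions x" "resolves M1 N1" "resolves M2 N2"
      by blast
    then show "\<exists>N1 N2. N = N1 + N2 \<and> resolves M1 N1 \<and> resolves (add_mset x M2) N2"
      by (intro exI[of _ N1] exI[of _ "add_mset a N2"]) (auto simp: resolves_add_mset_iff)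
  next
    assume "\<exists>N1 N2. N = N1 + N2 \<and> resolves M1 N1 \<and> resolves (add_mset x M2) N2"
    then obtain N1 a N2 where "N = N1 + add_mset a N2" "resolves M1 N1" "a \<in> resolutions x" "resolves M2 N2"
      by (auto simp: resolves_add_mset_iff)
    then show "\<exists>a N1 N2. N = add_mset a (N1 + N2) \<and> a \<in> resolutions x \<and> resolves M1 N1 \<and> resolves M2 N2"
      by (intro exI[of _ a] exI[of _ N1] exI[of _ N2]) simp
  qed
  finally show ?case .
qed simp

lemma resolves_exists: "\<exists>N. resolves M N"
proof (induction M)
  case (add x M)
  obtain N where "resolves M N"
    using add.IH ..
  moreover obtain a where "a \<in> resolutions x"
    using resolutions_nonempty by blast
  ultimately have "resolves (add_mset x M) (add_mset a N)"
    by (auto simp: resolves_add_mset_iff)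
  then show ?case ..
qed simp

lemma resolves_classicals_iff: "classicals M \<Longrightarrow> resolves M N \<longleftrightarrow> N = M"
  by (induction M arbitrary: N) (auto simp: resolves_add_mset_iff resolutions_classical)

lemma classicals_resolves: "resolves M N \<Longrightarrow> wffs M \<Longrightarrow> classicals N"
  by (induction M arbitrary: N) (auto simp: resolves_add_mset_iff classical_resolution)

lemma mpvars_resolves: "resolves M N \<Longrightarrow> mpvars b N \<subseteq> mpvars b M"
  by (induction M arbitrary: N) (fastforce simp: resolves_add_mset_iff dest: pvars_resolution)+

definition entails :: "fm multiset \<Rightarrow> fm multiset \<Rightarrow> bool" where
  "entails A B \<longleftrightarrow> (\<forall>v. (\<forall>a\<in>#A. sat v a) \<longrightarrow> (\<exists>b\<in>#B. sat v b))"

definition valid :: "fm multiset \<Rightarrow> fm multiset \<Rightarrow> bool" where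
  "valid \<Gamma> \<Delta> \<longleftrightarrow> (\<forall>A. resolves \<Gamma> A \<longrightarrow> (\<exists>B. resolves \<Delta> B \<and> entails A B))"

lemma validI: "(\<And>A. resolves \<Gamma> A \<Longrightarrow> \<exists>B. resolves \<Delta> B \<and> entails A B) \<Longrightarrow> valid \<Gamma> \<Delta>"
  by (simp add: valid_def)

lemma validE:
  assumes "valid \<Gamma> \<Delta>" and "resolves \<Gamma> A"
  obtains B where "resolves \<Delta> B" and "entails A B"
  using assms by (auto simp: valid_def)

lemma valid_weaken:
  assumes "valid \<Gamma> \<Delta>"
  shows "valid (\<Gamma> + \<Gamma>') (\<Delta> + \<Delta>')"
proof (rule validI)
  fix A assume "resolves (\<Gamma> + \<Gamma>') A"
  then obtain A1 A2 where A: "A = A1 + A2" "resolves \<Gamma> A1"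
    by (auto simp: resolves_plus_iff)
  obtain B where B: "resolves \<Delta> B" "entails A1 B"
    using validE[OF assms A(2)] .
  obtain B' where "resolves \<Delta>' B'"
    using resolves_exists by blast
  with A B have "resolves (\<Delta> + \<Delta>') (B + B') \<and> entails A (B + B')"
    by (auto simp: resolves_plus_iff entails_def)
  then show "\<exists>B. resolves (\<Delta> + \<Delta>') B \<and> entails A B" ..
qed

lemma valid_imp_entails_classicals:
  assumes "classicals \<Lambda>" and "valid \<Gamma> \<Lambda>" and "resolves \<Gamma> A"
  shows "entails A \<Lambda>"
proof -
  obtain B where "resolves \<Lambda> B" "entails A B"
    using validE[OF assms(2,3)] .
  with assms(1) show ?thesis
    by (simp add: resolves_classicals_iff)
qed

section \<open>Soundness\<close>

lemma valid_ax: "valid (\<Gamma> + {#Var p#}) ({#Var p#} + \<Delta>)"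
proof -
  have "valid {#Var p#} {#Var p#}"
    by (simp add: valid_def resolves_classicals_iff entails_def)
  then show ?thesis
    using valid_weaken[of "{#Var p#}" "{#Var p#}" \<Gamma> \<Delta>] by (simp add: add.commute)
qed

lemma valid_axBot: "valid (\<Gamma> + {#Bot#}) \<Delta>"
proof -
  have "valid {#Bot#} {#}"
    by (simp add: valid_def resolves_classicals_iff entails_def)
  then show ?thesis
    using valid_weaken[of "{#Bot#}" "{#}" \<Gamma> \<Delta>] by (simp add: add.commute)
qed

lemma valid_LNeg:
  assumes "classical \<alpha>" and "valid \<Gamma> ({#\<alpha>#} + \<Delta>)"
  shows "valid (\<Gamma> + {#Neg \<alpha>#}) \<Delta>"
proof (rule validI)
  fix A assume "resolves (\<Gamma> + {#Neg \<alpha>#}) A"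
  then obtain A' where A: "A = add_mset (Neg \<alpha>) A'" "resolves \<Gamma> A'"
    by (auto simp: resolves_add_mset_iff)
  obtain B' where B': "resolves ({#\<alpha>#} + \<Delta>) B'" "entails A' B'"
    using validE[OF assms(2) A(2)] .
  then obtain B where "B' = add_mset \<alpha> B" "resolves \<Delta> B"
    using resolutions_classical[OF assms(1)] by (auto simp: resolves_add_mset_iff)
  with A B' show "\<exists>B. resolves \<Delta> B \<and> entails A B"
    by (auto simp: entails_def)
qed

lemma valid_RNeg:
  assumes "classical \<alpha>" and "valid (\<Gamma> + {#\<alpha>#}) \<Delta>"
  shows "valid \<Gamma> ({#Neg \<alpha>#} + \<Delta>)"
proof (rule validI)
  fix A assume "resolves \<Gamma> A"
  then have "resolves (\<Gamma> + {#\<alpha>#}) (add_mset \<alpha> A)"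
    using resolutions_classical[OF assms(1)] by (auto simp: resolves_add_mset_iff)
  then obtain B where "resolves \<Delta> B" "entails (add_mset \<alpha> A) B"
    by (rule validE[OF assms(2)])
  then have "resolves ({#Neg \<alpha>#} + \<Delta>) (add_mset (Neg \<alpha>) B) \<and> entails A (add_mset (Neg \<alpha>) B)"
    by (auto simp: resolves_add_mset_iff entails_def)
  then show "\<exists>B. resolves ({#Neg \<alpha>#} + \<Delta>) B \<and> entails A B" ..
qed

lemma valid_LConj:
  assumes "valid (\<Gamma> + {#\<phi>, \<psi>#}) \<Delta>"
  shows "valid (\<Gamma> + {#Conj \<phi> \<psi>#}) \<Delta>"
proof (rule validI)
  fix A assume "resolves (\<Gamma> + {#Conj \<phi> \<psi>#}) A"
  then obtain a b A' where A: "A = add_mset (Conj a b) A'" "a \<in> resolutions \<phi>"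
    "b \<in> resolutions \<psi>" "resolves \<Gamma> A'"
    by (auto simp: resolves_add_mset_iff)
  then have "resolves (\<Gamma> + {#\<phi>, \<psi>#}) (A' + {#a, b#})"
    by (auto simp: resolves_add_mset_iff)
  then obtain B where "resolves \<Delta> B" "entails (A' + {#a, b#}) B"
    by (rule validE[OF assms])
  with A show "\<exists>B. resolves \<Delta> B \<and> entails A B"
    by (auto simp: entails_def)
qed

lemma valid_RConj:
  assumes "classicals \<Lambda>" and "valid \<Gamma> ({#\<phi>#} + \<Lambda>)" and "valid \<Gamma> ({#\<psi>#} + \<Lambda>)"
  shows "valid \<Gamma> ({#Conj \<phi> \<psi>#} + \<Lambda> + \<Delta>)"
proof -
  have "valid \<Gamma> ({#Conj \<phi> \<psi>#} + \<Lambda>)"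
  proof (rule validI)
    fix A assume A: "resolves \<Gamma> A"
    obtain B1 where "resolves ({#\<phi>#} + \<Lambda>) B1" "entails A B1"
      using validE[OF assms(2) A] .
    moreover obtain B2 where "resolves ({#\<psi>#} + \<Lambda>) B2" "entails A B2"
      using validE[OF assms(3) A] .
    ultimately obtain a b where "a \<in> resolutions \<phi>" "entails A (add_mset a \<Lambda>)"
      and "b \<in> resolutions \<psi>" "entails A (add_mset b \<Lambda>)"
      using resolves_classicals_iff[OF assms(1)] by (auto simp: resolves_add_mset_iff)
    with assms(1) have "resolves ({#Conj \<phi> \<psi>#} + \<Lambda>) (add_mset (Conj a b) \<Lambda>)
      \<and> entails A (add_mset (Conj a b) \<Lambda>)"
      by (auto simp: resolves_add_mset_iff resolves_classicals_iff entails_def)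
    then show "\<exists>B. resolves ({#Conj \<phi> \<psi>#} + \<Lambda>) B \<and> entails A B" ..
  qed
  then show ?thesis
    using valid_weaken[where \<Gamma>' = "{#}"] by fastforce
qed

lemma valid_LDisj:
  assumes "classicals \<Lambda>" and "valid (\<Gamma> + {#\<phi>#}) \<Lambda>" and "valid (\<Gamma> + {#\<psi>#}) \<Lambda>"
  shows "valid (\<Gamma> + {#Disj \<phi> \<psi>#}) (\<Lambda> + \<Delta>)"
proof -
  have "valid (\<Gamma> + {#Disj \<phi> \<psi>#}) \<Lambda>"
  proof (rule validI)
    fix A assume "resolves (\<Gamma> + {#Disj \<phi> \<psi>#}) A"
    then obtain a b A' where A: "A = add_mset (Disj a b) A'" "a \<in> resolutions \<phi>"
      "b \<in> resolutions \<psi>" "resolves \<Gamma> A'"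
      by (auto simp: resolves_add_mset_iff)
    then have "resolves (\<Gamma> + {#\<phi>#}) (add_mset a A')" "resolves (\<Gamma> + {#\<psi>#}) (add_mset b A')"
      by (auto simp: resolves_add_mset_iff)
    from valid_imp_entails_classicals[OF assms(1,2) this(1)]
      valid_imp_entails_classicals[OF assms(1,3) this(2)]
    show "\<exists>B. resolves \<Lambda> B \<and> entails A B"
      using A assms(1) by (auto simp: resolves_classicals_iff entails_def)
  qed
  then show ?thesis
    using valid_weaken[where \<Gamma>' = "{#}"] by fastforce
qed

lemma valid_RDisj:
  assumes "valid \<Gamma> ({#\<phi>, \<psi>#} + \<Delta>)"
  shows "valid \<Gamma> ({#Disj \<phi> \<psi>#} + \<Delta>)"
proof (rule validI)
  fix A assume "resolves \<Gamma> A"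
  then obtain B' where "resolves ({#\<phi>, \<psi>#} + \<Delta>) B'" "entails A B'"
    by (rule validE[OF assms])
  then obtain a b B where "a \<in> resolutions \<phi>" "b \<in> resolutions \<psi>" "resolves \<Delta> B"
    "entails A (B + {#a, b#})"
    by (auto simp: resolves_add_mset_iff)
  then have "resolves ({#Disj \<phi> \<psi>#} + \<Delta>) (add_mset (Disj a b) B)
    \<and> entails A (add_mset (Disj a b) B)"
    by (auto simp: resolves_add_mset_iff entails_def)
  then show "\<exists>B. resolves ({#Disj \<phi> \<psi>#} + \<Delta>) B \<and> entails A B" ..
qed

lemma valid_left_resolutions_cover:
  assumes "resolutions x \<subseteq> resolutions y \<union> resolutions z"
    and "valid (\<Gamma> + {#y#}) \<Delta>" and "valid (\<Gamma> + {#z#}) \<Delta>"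
  shows "valid (\<Gamma> + {#x#}) \<Delta>"
proof (rule validI)
  fix A assume "resolves (\<Gamma> + {#x#}) A"
  with assms(1) obtain a A' where "A = add_mset a A'" "resolves \<Gamma> A'"
    and "a \<in> resolutions y \<or> a \<in> resolutions z"
    by (auto simp: resolves_add_mset_iff)
  then have "resolves (\<Gamma> + {#y#}) A \<or> resolves (\<Gamma> + {#z#}) A"
    by (auto simp: resolves_add_mset_iff)
  then obtain B where "resolves \<Delta> B" "entails A B"
    by (elim disjE validE[OF assms(2)] validE[OF assms(3)])
  then show "\<exists>B. resolves \<Delta> B \<and> entails A B"
    by blast
qed

lemma valid_right_resolutions_mono:
  assumes "resolutions x \<subseteq> resolutions y" and "valid \<Gamma> ({#x#} + \<Delta>)"
  shows "valid \<Gamma> ({#y#} + \<Delta>)"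
proof (rule validI)
  fix A assume "resolves \<Gamma> A"
  then obtain B where "resolves ({#x#} + \<Delta>) B" "entails A B"
    by (rule validE[OF assms(2)])
  with assms(1) show "\<exists>B. resolves ({#y#} + \<Delta>) B \<and> entails A B"
    by (auto simp: resolves_add_mset_iff)
qed

lemma valid_cut:
  assumes "valid \<Gamma> ({#\<phi>#} + \<Delta>)" and "valid (\<Pi> + {#\<phi>#}) \<Sigma>"
  shows "valid (\<Pi> + \<Gamma>) (\<Delta> + \<Sigma>)"
proof (rule validI)
  fix A assume "resolves (\<Pi> + \<Gamma>) A"
  then obtain A1 A2 where A: "A = A1 + A2" "resolves \<Pi> A1" "resolves \<Gamma> A2"
    by (auto simp: resolves_plus_iff)
  obtain B' where "resolves ({#\<phi>#} + \<Delta>) B'" "entails A2 B'"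
    using validE[OF assms(1) A(3)] .
  then obtain r B where r: "r \<in> resolutions \<phi>" "resolves \<Delta> B" "entails A2 (add_mset r B)"
    by (auto simp: resolves_add_mset_iff)
  with A have "resolves (\<Pi> + {#\<phi>#}) (add_mset r A1)"
    by (auto simp: resolves_add_mset_iff)
  then obtain C where "resolves \<Sigma> C" "entails (add_mset r A1) C"
    by (rule validE[OF assms(2)])
  have "entails A (B + C)"
    unfolding entails_def
  proof (intro allI impI)
    fix v assume "\<forall>a\<in>#A. sat v a"
    with A r have "sat v r \<or> (\<exists>b\<in>#B. sat v b)"
      by (auto simp: entails_def)
    with A \<open>entails (add_mset r A1) C\<close> \<open>\<forall>a\<in>#A. sat v a\<close> show "\<exists>b\<in>#B + C. sat v b"
      by (auto simp: entails_def)
  qed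
  with r \<open>resolves \<Sigma> C\<close> show "\<exists>B. resolves (\<Delta> + \<Sigma>) B \<and> entails A B"
    by (auto simp: resolves_plus_iff)
qed

theorem gt_imp_valid: "gt c \<Gamma> \<Delta> \<Longrightarrow> valid \<Gamma> \<Delta>"
proof (induction rule: gt.induct)
  case ax
  show ?case by (rule valid_ax)
next
  case axBot
  show ?case by (rule valid_axBot)
next
  case LNeg
  show ?case using LNeg.hyps(1) LNeg.IH by (rule valid_LNeg)
next
  case RNeg
  show ?case using RNeg.hyps(1) RNeg.IH by (rule valid_RNeg)
next
  case LConj
  show ?case using LConj.IH by (rule valid_LConj)
next
  case RConj
  show ?case using RConj.hyps(1) RConj.IH by (rule valid_RConj)
next
  case LDisj
  show ?case using LDisj.hyps(1) LDisj.IH by (rule valid_LDisj)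
next
  case RDisj
  show ?case using RDisj.IH by (rule valid_RDisj)
next
  case LIDisj
  show ?case using LIDisj.IH
    by (rule valid_left_resolutions_cover[OF equalityD1[OF resolutions_fill_IDisj]])
next
  case RIDisjL
  show ?case
    by (rule valid_right_resolutions_mono[OF _ RIDisjL.IH]) (auto simp: resolutions_fill_IDisj)
next
  case RIDisjR
  show ?case
    by (rule valid_right_resolutions_mono[OF _ RIDisjR.IH]) (auto simp: resolutions_fill_IDisj)
next
  case Cut
  show ?case using Cut.IH by (rule valid_cut)
qed

section \<open>Completeness of the cut-free calculus\<close>

definition atomic :: "fm \<Rightarrow> bool" where
  "atomic f \<longleftrightarrow> f = Bot \<or> (\<exists>p. f = Var p)"

lemma atomic_imp_wff: "atomic f \<Longrightarrow> wff f"
  by (auto simp: atomic_def)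

lemma entails_imp_GTminus_atomic:
  assumes atoms: "\<forall>x\<in>#G + D. atomic x" and "entails G D"
  shows "GTminus G D"
proof -
  have wffs: "wffs G" "wffs D"
    using atoms atomic_imp_wff by (auto simp: wffs_def)
  show ?thesis
  proof (cases "Bot \<in># G")
    case True
    then obtain G' where "G = add_mset Bot G'"
      by (metis multi_member_split)
    with wffs show ?thesis
      using gt.axBot[of G' D False] by simp
  next
    case False
    define v where "v p \<longleftrightarrow> Var p \<in># G" for p
    have "\<forall>a\<in>#G. sat v a"
    proof
      fix a assume "a \<in># G"
      with atoms False show "sat v a"
        by (cases a) (auto simp: atomic_def v_def)
    qed
    then obtain b where b: "b \<in># D" "sat v b"
      using assms(2) unfolding entails_def by blast
    moreover have "atomic b"
      using atoms b(1) by simp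
    ultimately obtain p where "b = Var p"
      by (auto simp: atomic_def)
    with b have "Var p \<in># D" "Var p \<in># G"
      by (simp_all add: v_def)
    then obtain G' D' where "G = add_mset (Var p) G'" "D = add_mset (Var p) D'"
      by (metis multi_member_split)
    with wffs show ?thesis
      using gt.ax[of G' D' False p] by simp
  qed
qed

abbreviation fsize :: "fm multiset \<Rightarrow> nat" where
  "fsize M \<equiv> \<Sum>x\<in>#M. size x"

lemma entails_imp_GTminus_left_step:
  assumes "classical x" and "\<not> atomic x" and "classicals G" and "classicals D"
    and "entails (add_mset x G) D"
    and IH: "\<And>G' D'. fsize G' + fsize D' < fsize (add_mset x G) + fsize D \<Longrightarrow>
      classicals G' \<Longrightarrow> classicals D' \<Longrightarrow> entails G' D' \<Longrightarrow> GTminus G' D'"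
  shows "GTminus (add_mset x G) D"
  using assms(1)
proof (cases x)
  case (Neg a)
  with assms(1,3-5) have "GTminus G (add_mset a D)"
    by (intro IH) (auto simp: entails_def)
  with Neg assms(1) show ?thesis
    using gt.LNeg[of a False G D] by simp
next
  case (Conj a b)
  with assms(1,3-5) have "GTminus (G + {#a, b#}) D"
    by (intro IH) (auto simp: entails_def)
  with Conj show ?thesis
    using gt.LConj[of False G a b D] by simp
next
  case (Disj a b)
  with assms(1,3-5) have "GTminus (G + {#a#}) D" "GTminus (G + {#b#}) D"
    by (intro IH; auto simp: entails_def)+
  with Disj assms(4) show ?thesis
    using gt.LDisj[of D "{#}" False G a b] by (simp add: classicals_imp_wffs)
qed (use assms(2) in \<open>auto simp: atomic_def\<close>)

lemma entails_imp_GTminus_right_step: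
  assumes "classical x" and "\<not> atomic x" and "classicals G" and "classicals D"
    and "entails G (add_mset x D)"
    and IH: "\<And>G' D'. fsize G' + fsize D' < fsize G + fsize (add_mset x D) \<Longrightarrow>
      classicals G' \<Longrightarrow> classicals D' \<Longrightarrow> entails G' D' \<Longrightarrow> GTminus G' D'"
  shows "GTminus G (add_mset x D)"
  using assms(1)
proof (cases x)
  case (Neg a)
  with assms(1,3-5) have "GTminus (add_mset a G) D"
    by (intro IH) (auto simp: entails_def)
  with Neg assms(1) show ?thesis
    using gt.RNeg[of a False G D] by simp
next
  case (Conj a b)
  with assms(1,3-5) have "GTminus G (add_mset a D)" "GTminus G (add_mset b D)"
    by (intro IH; auto simp: entails_def)+
  with Conj assms(4) show ?thesis
    using gt.RConj[of D "{#}" False G a b] by (simp add: classicals_imp_wffs)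
next
  case (Disj a b)
  with assms(1,3-5) have "GTminus G (D + {#a, b#})"
    by (intro IH) (auto simp: entails_def)
  with Disj show ?thesis
    using gt.RDisj[of False G a b D] by (simp add: add.commute)
qed (use assms(2) in \<open>auto simp: atomic_def\<close>)

lemma entails_imp_GTminus:
  assumes "classicals G" and "classicals D" and "entails G D"
  shows "GTminus G D"
  using assms
proof (induction "fsize G + fsize D" arbitrary: G D rule: less_induct)
  case less
  consider (atomic) "\<forall>x\<in>#G + D. atomic x"
    | (left) x G' where "G = add_mset x G'" "\<not> atomic x"
    | (right) x D' where "D = add_mset x D'" "\<not> atomic x"
    by (metis multi_member_split union_iff)
  then show ?case
  proof cases
    case atomic
    then show ?thesis
      using less.prems(3) by (rule entails_imp_GTminus_atomic)
  next
    case left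
    have "GTminus (add_mset x G') D"
      by (rule entails_imp_GTminus_left_step[OF _ left(2) _ _ _ less.hyps[unfolded left(1)]])
        (use left(1) less.prems in simp_all)
    with left(1) show ?thesis
      by simp
  next
    case right
    have "GTminus G (add_mset x D')"
      by (rule entails_imp_GTminus_right_step[OF _ right(2) _ _ _ less.hyps[unfolded right(1)]])
        (use right(1) less.prems in simp_all)
    with right(1) show ?thesis
      by simp
  qed
qed

lemma nonclassical_wff_fill_IDisj:
  "wff f \<Longrightarrow> \<not> classical f \<Longrightarrow> \<exists>\<chi> a b. f = fill \<chi> (IDisj a b)"
proof (induction f)
  case (Conj f1 f2)
  then show ?case by (metis classical.simps(4) fill.simps(2,3) wff.simps(4))
next
  case (Disj f1 f2)
  then show ?case by (metis classical.simps(5) fill.simps(4,5) wff.simps(5))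
next
  case (IDisj f1 f2)
  then show ?case by (metis fill.simps(1))
qed auto

lemma wff_fill: "wff (fill \<chi> x) \<Longrightarrow> wff x"
  by (induction \<chi>) auto

lemma wff_fill_IDisj: "wff (fill \<chi> (IDisj a b)) \<Longrightarrow> wff (fill \<chi> a) \<and> wff (fill \<chi> b)"
  by (induction \<chi>) auto

lemma size_fill_IDisj:
  "size (fill \<chi> a) < size (fill \<chi> (IDisj a b))"
  "size (fill \<chi> b) < size (fill \<chi> (IDisj a b))"
  by (induction \<chi>) auto

lemma GTminus_resolution_right:
  assumes "wff d" and "r \<in> resolutions d" and "GTminus \<Gamma> (add_mset r \<Delta>)"
  shows "GTminus \<Gamma> (add_mset d \<Delta>)"
  using assms
proof (induction "size d" arbitrary: d rule: less_induct)
  case less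
  show ?case
  proof (cases "classical d")
    case True
    with less.prems show ?thesis
      by (simp add: resolutions_classical)
  next
    case False
    with less.prems(1) obtain \<chi> a b where d: "d = fill \<chi> (IDisj a b)"
      using nonclassical_wff_fill_IDisj by blast
    with less.prems(1) have wff: "wff (fill \<chi> a)" "wff (fill \<chi> b)"
      using wff_fill_IDisj by blast+
    from less.prems(2) d have "r \<in> resolutions (fill \<chi> a) \<or> r \<in> resolutions (fill \<chi> b)"
      by (simp add: resolutions_fill_IDisj)
    then show ?thesis
    proof
      assume "r \<in> resolutions (fill \<chi> a)"
      with less.hyps less.prems(3) d wff have "GTminus \<Gamma> ({#fill \<chi> a#} + \<Delta>)"
        using size_fill_IDisj by simp
      with d wff show ?thesis
        using gt.RIDisjL[of b False \<Gamma> \<chi> a \<Delta>] wff_fill by simp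
    next
      assume "r \<in> resolutions (fill \<chi> b)"
      with less.hyps less.prems(3) d wff have "GTminus \<Gamma> ({#fill \<chi> b#} + \<Delta>)"
        using size_fill_IDisj by simp
      with d wff show ?thesis
        using gt.RIDisjR[of a False \<Gamma> \<chi> b \<Delta>] wff_fill by simp
    qed
  qed
qed

lemma GTminus_resolutions_left:
  assumes "wff d" and "\<forall>r\<in>resolutions d. GTminus (add_mset r \<Gamma>) \<Delta>"
  shows "GTminus (add_mset d \<Gamma>) \<Delta>"
  using assms
proof (induction "size d" arbitrary: d rule: less_induct)
  case less
  show ?case
  proof (cases "classical d")
    case True
    with less.prems show ?thesis
      by (simp add: resolutions_classical)
  next
    case False
    with less.prems(1) obtain \<chi> a b where d: "d = fill \<chi> (IDisj a b)"
      using nonclassical_wff_fill_IDisj by blast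
    with less.prems(1) have wff: "wff (fill \<chi> a)" "wff (fill \<chi> b)"
      using wff_fill_IDisj by blast+
    with less.hyps less.prems(2) d
    have "GTminus (\<Gamma> + {#fill \<chi> a#}) \<Delta>" "GTminus (\<Gamma> + {#fill \<chi> b#}) \<Delta>"
      using size_fill_IDisj by (simp_all add: resolutions_fill_IDisj)
    with d show ?thesis
      using gt.LIDisj[of False \<Gamma> \<chi> a \<Delta> b] by simp
  qed
qed

lemma GTminus_resolves_right:
  "resolves \<Delta> B \<Longrightarrow> wffs \<Delta> \<Longrightarrow> GTminus \<Gamma> (B + D) \<Longrightarrow> GTminus \<Gamma> (\<Delta> + D)"
proof (induction \<Delta> arbitrary: B D)
  case (add x \<Delta>)
  then obtain r B' where "B = add_mset r B'" "r \<in> resolutions x" "resolves \<Delta> B'"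
    by (auto simp: resolves_add_mset_iff)
  with add.prems have "GTminus \<Gamma> (B' + add_mset x D)"
    using GTminus_resolution_right[of x r \<Gamma> "B' + D"] by simp
  with add show ?case
    using \<open>resolves \<Delta> B'\<close> by fastforce
qed simp

lemma GTminus_resolves_left:
  "wffs \<Gamma> \<Longrightarrow> (\<And>A. resolves \<Gamma> A \<Longrightarrow> GTminus (A + G) D) \<Longrightarrow> GTminus (\<Gamma> + G) D"
proof (induction \<Gamma> arbitrary: G)
  case (add x \<Gamma>)
  have "GTminus (A + add_mset x G) D" if "resolves \<Gamma> A" for A
  proof -
    have "GTminus (add_mset r (A + G)) D" if "r \<in> resolutions x" for r
    proof -
      from that \<open>resolves \<Gamma> A\<close> have "resolves (add_mset x \<Gamma>) (add_mset r A)"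
        by (auto simp: resolves_add_mset_iff)
      then show ?thesis
        using add.prems(2) by fastforce
    qed
    with add.prems(1) show ?thesis
      using GTminus_resolutions_left[of x "A + G" D] by simp
  qed
  with add show ?case
    by fastforce
qed simp

theorem valid_imp_GTminus:
  assumes "wffs \<Gamma>" and "wffs \<Delta>" and "valid \<Gamma> \<Delta>"
  shows "GTminus \<Gamma> \<Delta>"
proof -
  have "GTminus (A + {#}) \<Delta>" if A: "resolves \<Gamma> A" for A
  proof -
    obtain B where B: "resolves \<Delta> B" "entails A B"
      using validE[OF assms(3) A] .
    have "GTminus A (B + {#})"
      using entails_imp_GTminus classicals_resolves[OF A assms(1)]
        classicals_resolves[OF B(1) assms(2)] B(2) by simp
    then show ?thesis
      using GTminus_resolves_right[OF B(1) assms(2), of A "{#}"] by simp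
  qed
  then show ?thesis
    using GTminus_resolves_left[OF assms(1)] by fastforce
qed

section \<open>Lyndon hulls\<close>

fun conjs :: "fm list \<Rightarrow> fm" where
  "conjs [] = Neg Bot"
| "conjs (x # xs) = Conj x (conjs xs)"

fun disjs :: "fm list \<Rightarrow> fm" where
  "disjs [] = Bot"
| "disjs (x # xs) = Disj x (disjs xs)"

fun idisjs :: "fm list \<Rightarrow> fm" where
  "idisjs [] = Bot"
| "idisjs (x # xs) = IDisj x (idisjs xs)"

lemma sat_conjs: "sat v (conjs xs) \<longleftrightarrow> (\<forall>x\<in>set xs. sat v x)"
  by (induction xs) auto

lemma pvars_conjs: "pvars b (conjs xs) = (\<Union>x\<in>set xs. pvars b x)"
  by (induction xs) auto

lemma classical_conjs: "classical (conjs xs) \<longleftrightarrow> (\<forall>x\<in>set xs. classical x)"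
  by (induction xs) auto

lemma sat_disjs: "sat v (disjs xs) \<longleftrightarrow> (\<exists>x\<in>set xs. sat v x)"
  by (induction xs) auto

lemma pvars_disjs: "pvars b (disjs xs) = (\<Union>x\<in>set xs. pvars b x)"
  by (induction xs) auto

lemma classical_disjs: "classical (disjs xs) \<longleftrightarrow> (\<forall>x\<in>set xs. classical x)"
  by (induction xs) auto

lemma pvars_idisjs: "pvars b (idisjs xs) = (\<Union>x\<in>set xs. pvars b x)"
  by (induction xs) auto

lemma wff_idisjs: "wff (idisjs xs) \<longleftrightarrow> (\<forall>x\<in>set xs. wff x)"
  by (induction xs) auto

lemma resolutions_idisjs:
  "\<forall>x\<in>set xs. classical x \<Longrightarrow> resolutions (idisjs xs) = insert Bot (set xs)"
  by (induction xs) (auto simp: resolutions_classical)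

definition some_list :: "'a set \<Rightarrow> 'a list" where
  "some_list X = (SOME xs. set xs = X)"

lemma set_some_list: "finite X \<Longrightarrow> set (some_list X) = X"
  unfolding some_list_def by (metis (mono_tags) finite_list someI_ex)

definition minterm :: "nat set \<Rightarrow> nat set \<Rightarrow> (nat \<Rightarrow> bool) \<Rightarrow> fm" where
  "minterm P N v = conjs (map Var (sorted_list_of_set {p\<in>P. v p})
     @ map (\<lambda>p. Neg (Var p)) (sorted_list_of_set {p\<in>N. \<not> v p}))"

context
  fixes P N :: "nat set"
  assumes finite: "finite P" "finite N"
begin

lemma sat_minterm:
  "sat w (minterm P N v) \<longleftrightarrow> (\<forall>p\<in>P. v p \<longrightarrow> w p) \<and> (\<forall>p\<in>N. \<not> v p \<longrightarrow> \<not> w p)"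
  using finite by (auto simp: minterm_def sat_conjs ball_Un Ball_image_comp)

lemma minterm_props:
  "classical (minterm P N v)" "pvars True (minterm P N v) \<subseteq> P" "pvars False (minterm P N v) \<subseteq> N"
  using finite by (auto simp: minterm_def classical_conjs pvars_conjs)

lemma finite_range_minterm: "finite (range (minterm P N))"
proof -
  have "{p\<in>P. v p} = {p\<in>P. p \<in> {p \<in> P \<union> N. v p}}" "{p\<in>N. \<not> v p} = {p\<in>N. p \<notin> {p \<in> P \<union> N. v p}}"
    for v by auto
  then have "minterm P N v = minterm P N (\<lambda>p. p \<in> {p \<in> P \<union> N. v p})" for v
    by (simp only: minterm_def)
  then have "range (minterm P N) \<subseteq> (\<lambda>S. minterm P N (\<lambda>p. p \<in> S)) ` Pow (P \<union> N)"
    by blast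
  with finite show ?thesis
    using finite_subset by blast
qed

definition lyndon_hull :: "((nat \<Rightarrow> bool) \<Rightarrow> bool) \<Rightarrow> fm" where
  "lyndon_hull Q = disjs (some_list (minterm P N ` Collect Q))"

lemma set_some_list_minterms: "set (some_list (minterm P N ` Collect Q)) = minterm P N ` Collect Q"
  by (rule set_some_list, rule finite_subset[OF image_mono[OF subset_UNIV] finite_range_minterm])

lemma sat_lyndon_hull:
  "sat w (lyndon_hull Q) \<longleftrightarrow> (\<exists>v. Q v \<and> (\<forall>p\<in>P. v p \<longrightarrow> w p) \<and> (\<forall>p\<in>N. \<not> v p \<longrightarrow> \<not> w p))"
  by (auto simp: lyndon_hull_def sat_disjs set_some_list_minterms sat_minterm)

lemma lyndon_hull_props:
  "classical (lyndon_hull Q)" "pvars True (lyndon_hull Q) \<subseteq> P" "pvars False (lyndon_hull Q) \<subseteq> N"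
  using minterm_props(1)
  by (auto simp: lyndon_hull_def classical_disjs pvars_disjs set_some_list_minterms
      intro: minterm_props(2,3)[THEN subsetD])

lemma finite_range_lyndon_hull: "finite (range lyndon_hull)"
proof -
  have "range lyndon_hull \<subseteq> (\<lambda>X. disjs (some_list X)) ` Pow (range (minterm P N))"
    unfolding lyndon_hull_def by blast
  then show ?thesis
    using finite_range_minterm finite_subset by blast
qed

end

definition countermodel :: "fm multiset \<Rightarrow> fm multiset \<Rightarrow> (nat \<Rightarrow> bool) \<Rightarrow> bool" where
  "countermodel A L v \<longleftrightarrow> (\<forall>a\<in>#A. sat v a) \<and> (\<forall>l\<in>#L. \<not> sat v l)"

lemma entails_lyndon_hull_left:
  assumes "finite P" and "finite N"
  shows "entails A (add_mset (lyndon_hull P N (countermodel A L)) L)"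
  unfolding entails_def
proof (intro allI impI)
  fix v assume "\<forall>a\<in>#A. sat v a"
  then have "(\<exists>l\<in>#L. sat v l) \<or> countermodel A L v"
    by (auto simp: countermodel_def)
  moreover have "sat v (lyndon_hull P N (countermodel A L))" if "countermodel A L v"
    using that sat_lyndon_hull[OF assms] by blast
  ultimately show "\<exists>b\<in>#add_mset (lyndon_hull P N (countermodel A L)) L. sat v b"
    by auto
qed

lemma entails_lyndon_hull_right:
  assumes entails: "entails (A1 + A2) (L + B)"
    and left: "mpvars True A1 \<union> mpvars False L \<subseteq> Xp" "mpvars False A1 \<union> mpvars True L \<subseteq> Xn"
    and right: "mpvars False A2 \<union> mpvars True B \<subseteq> Yp" "mpvars True A2 \<union> mpvars False B \<subseteq> Yn"
    and finite: "finite (Xp \<inter> Yp)" "finite (Xn \<inter> Yn)"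
  shows "entails (add_mset (lyndon_hull (Xp \<inter> Yp) (Xn \<inter> Yn) (countermodel A1 L)) A2) B"
  unfolding entails_def
proof (intro allI impI)
  fix w assume w: "\<forall>a\<in>#add_mset (lyndon_hull (Xp \<inter> Yp) (Xn \<inter> Yn) (countermodel A1 L)) A2. sat w a"
  then obtain v where v: "countermodel A1 L v"
    and vw: "\<forall>p\<in>Xp \<inter> Yp. v p \<longrightarrow> w p" "\<forall>p\<in>Xn \<inter> Yn. \<not> v p \<longrightarrow> \<not> w p"
    using sat_lyndon_hull[OF finite] by auto
  \<comment> \<open>u is chosen so that the left-hand formulas transfer from v to u (\<open>vu\<close>) and the
    right-hand ones between u and w (\<open>uw\<close>); \<open>vw\<close> is exactly what permits both on the
    shared variables.\<close>
  define u where "u p = (if p \<in> Yp then (if p \<in> Yn then w p else v p \<and> w p)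
    else (if p \<in> Yn then v p \<or> w p else v p))" for p
  have vu: "\<forall>p\<in>Xp. v p \<longrightarrow> u p" "\<forall>p\<in>Xn. u p \<longrightarrow> v p"
    and uw: "\<forall>p\<in>Yp. u p \<longrightarrow> w p" "\<forall>p\<in>Yn. w p \<longrightarrow> u p"
    using vw by (auto simp: u_def)
  have "sat u a" if "a \<in># A1" for a
  proof -
    have "pvars True a \<subseteq> Xp" "pvars False a \<subseteq> Xn"
      using pvars_subset_mpvars[OF that] left by blast+
    with vu v that show ?thesis
      using sat_mono[of a v u] by (auto simp: countermodel_def)
  qed
  moreover have "sat u a" if "a \<in># A2" for a
  proof -
    have "pvars True a \<subseteq> Yn" "pvars False a \<subseteq> Yp"
      using pvars_subset_mpvars[OF that] right by blast+
    with uw w that show ?thesis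
      using sat_mono[of a w u] by auto
  qed
  ultimately have "\<forall>a\<in>#A1 + A2. sat u a"
    by auto
  then obtain b where b: "b \<in># L + B" "sat u b"
    using entails unfolding entails_def by blast
  have "\<not> sat u l" if "l \<in># L" for l
  proof -
    have "pvars True l \<subseteq> Xn" "pvars False l \<subseteq> Xp"
      using pvars_subset_mpvars[OF that] left by blast+
    with vu v that show ?thesis
      using sat_mono[of l u v] by (auto simp: countermodel_def)
  qed
  with b have "b \<in># B"
    by auto
  moreover have "pvars True b \<subseteq> Yp" "pvars False b \<subseteq> Yn"
    using pvars_subset_mpvars[OF \<open>b \<in># B\<close>] right by blast+
  ultimately show "\<exists>b\<in>#B. sat w b"
    using uw b(2) sat_mono[of b u w] by blast
qed

section \<open>Interpolants\<close>

definition shared_vars ::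
  "bool \<Rightarrow> fm multiset \<Rightarrow> fm multiset \<Rightarrow> fm multiset \<Rightarrow> fm multiset \<Rightarrow> nat set" where
  "shared_vars i \<Gamma>1 \<Gamma>2 \<Lambda>1 \<Delta>2 =
     (mpvars i \<Gamma>1 \<union> mpvars (\<not> i) \<Lambda>1) \<inter> (mpvars (\<not> i) \<Gamma>2 \<union> mpvars i \<Delta>2)"

lemma shared_vars_simps:
  "shared_vars True \<Gamma>1 \<Gamma>2 \<Lambda>1 \<Delta>2 =
     (mpvars True \<Gamma>1 \<union> mpvars False \<Lambda>1) \<inter> (mpvars False \<Gamma>2 \<union> mpvars True \<Delta>2)"
  "shared_vars False \<Gamma>1 \<Gamma>2 \<Lambda>1 \<Delta>2 =
     (mpvars False \<Gamma>1 \<union> mpvars True \<Lambda>1) \<inter> (mpvars True \<Gamma>2 \<union> mpvars False \<Delta>2)"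
  by (simp_all add: shared_vars_def)

lemma finite_shared_vars: "finite (shared_vars i \<Gamma>1 \<Gamma>2 \<Lambda>1 \<Delta>2)"
  by (simp add: shared_vars_def finite_mpvars)

locale valid_partition =
  fixes \<Gamma>1 \<Gamma>2 \<Lambda>1 \<Delta>2 :: "fm multiset"
  assumes wffs_\<Gamma>1: "wffs \<Gamma>1" and wffs_\<Gamma>2: "wffs \<Gamma>2" and classicals_\<Lambda>1: "classicals \<Lambda>1"
    and wffs_\<Delta>2: "wffs \<Delta>2" and valid_sequent: "valid (\<Gamma>1 + \<Gamma>2) (\<Lambda>1 + \<Delta>2)"
begin

abbreviation shared_pos :: "nat set" where
  "shared_pos \<equiv> shared_vars True \<Gamma>1 \<Gamma>2 \<Lambda>1 \<Delta>2"

abbreviation shared_neg :: "nat set" where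
  "shared_neg \<equiv> shared_vars False \<Gamma>1 \<Gamma>2 \<Lambda>1 \<Delta>2"

abbreviation hull :: "fm multiset \<Rightarrow> fm" where
  "hull A \<equiv> lyndon_hull shared_pos shared_neg (countermodel A \<Lambda>1)"

definition candidates :: "fm set" where
  "candidates = hull ` {A. resolves \<Gamma>1 A}"

lemma finite_candidates: "finite candidates"
proof -
  have "candidates \<subseteq> range (lyndon_hull shared_pos shared_neg)"
    by (auto simp: candidates_def)
  then show ?thesis
    using finite_range_lyndon_hull[OF finite_shared_vars finite_shared_vars] finite_subset by blast
qed

lemma classical_candidate: "t \<in> candidates \<Longrightarrow> classical t"
  using lyndon_hull_props(1)[OF finite_shared_vars finite_shared_vars] by (auto simp: candidates_def)

lemma pvars_candidate:
  assumes "t \<in> candidates"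
  shows "pvars i t \<subseteq> shared_vars i \<Gamma>1 \<Gamma>2 \<Lambda>1 \<Delta>2"
proof -
  obtain A where "t = hull A"
    using assms by (auto simp: candidates_def)
  then have "pvars True t \<subseteq> shared_pos" "pvars False t \<subseteq> shared_neg"
    using lyndon_hull_props(2,3)[OF finite_shared_vars finite_shared_vars] by simp_all
  then show ?thesis
    by (cases i) simp_all
qed

lemma candidate_left: "resolves \<Gamma>1 A \<Longrightarrow> \<exists>t\<in>candidates. entails A (add_mset t \<Lambda>1)"
  using entails_lyndon_hull_left[OF finite_shared_vars finite_shared_vars]
  by (auto simp: candidates_def)

lemma candidate_right:
  assumes "t \<in> candidates" and "resolves \<Gamma>2 A2"
  obtains B where "resolves \<Delta>2 B" and "entails (add_mset t A2) B"
proof -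
  obtain A1 where A1: "resolves \<Gamma>1 A1" "t = hull A1"
    using assms(1) by (auto simp: candidates_def)
  with assms(2) have "resolves (\<Gamma>1 + \<Gamma>2) (A1 + A2)"
    by (auto simp: resolves_plus_iff)
  then obtain B' where "resolves (\<Lambda>1 + \<Delta>2) B'" "entails (A1 + A2) B'"
    by (rule validE[OF valid_sequent])
  then obtain B where B: "resolves \<Delta>2 B" "entails (A1 + A2) (\<Lambda>1 + B)"
    using resolves_classicals_iff[OF classicals_\<Lambda>1] by (auto simp: resolves_plus_iff)
  have "entails (add_mset t A2) B"
    unfolding A1(2) shared_vars_simps
    using mpvars_resolves[OF A1(1)] mpvars_resolves[OF assms(2)] mpvars_resolves[OF B(1)]
    by (intro entails_lyndon_hull_right[OF B(2)]; blast intro: finite_mpvars)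
  with B(1) show thesis
    by (rule that)
qed

lemma seq_interpolantI:
  assumes "wff \<phi>" and "\<And>i. pvars i \<phi> \<subseteq> shared_vars i \<Gamma>1 \<Gamma>2 \<Lambda>1 \<Delta>2"
    and "valid \<Gamma>1 (\<Lambda>1 + {#\<phi>#})" and "valid (\<Gamma>2 + {#\<phi>#}) \<Delta>2"
  shows "seq_interpolant \<Gamma>1 \<Gamma>2 \<Lambda>1 \<Delta>2 \<phi>"
proof -
  have "GTminus \<Gamma>1 (\<Lambda>1 + {#\<phi>#})"
    by (rule valid_imp_GTminus)
      (use assms(1,3) wffs_\<Gamma>1 classicals_imp_wffs[OF classicals_\<Lambda>1] in simp_all)
  moreover have "GTminus (\<Gamma>2 + {#\<phi>#}) \<Delta>2"
    by (rule valid_imp_GTminus) (use assms(1,4) wffs_\<Gamma>2 wffs_\<Delta>2 in simp_all)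
  ultimately show ?thesis
    using assms(1,2) unfolding seq_interpolant_def shared_vars_def by blast
qed

definition candidate_list :: "fm list" where
  "candidate_list = some_list candidates"

lemma set_candidate_list: "set candidate_list = candidates"
  unfolding candidate_list_def using finite_candidates by (rule set_some_list)

lemma valid_left_idisjs_candidates: "valid \<Gamma>1 (\<Lambda>1 + {#idisjs candidate_list#})"
proof (rule validI)
  fix A assume "resolves \<Gamma>1 A"
  then obtain t where "t \<in> candidates" "entails A (add_mset t \<Lambda>1)"
    using candidate_left by blast
  moreover from this(1) have "resolves (\<Lambda>1 + {#idisjs candidate_list#}) (add_mset t \<Lambda>1)"
    using resolves_classicals_iff[OF classicals_\<Lambda>1] set_candidate_list classical_candidate
    by (auto simp: resolves_add_mset_iff resolutions_idisjs)
  ultimately show "\<exists>B. resolves (\<Lambda>1 + {#idisjs candidate_list#}) B \<and> entails A B"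
    by blast
qed

lemma valid_right_idisjs_candidates: "valid (\<Gamma>2 + {#idisjs candidate_list#}) \<Delta>2"
proof (rule validI)
  fix A assume "resolves (\<Gamma>2 + {#idisjs candidate_list#}) A"
  then obtain r A2 where A: "A = add_mset r A2" "r \<in> insert Bot candidates" "resolves \<Gamma>2 A2"
    using set_candidate_list classical_candidate by (auto simp: resolves_add_mset_iff resolutions_idisjs)
  show "\<exists>B. resolves \<Delta>2 B \<and> entails A B"
  proof (cases "r = Bot")
    case True
    obtain B where "resolves \<Delta>2 B"
      using resolves_exists by blast
    with A True show ?thesis
      by (auto simp: entails_def)
  next
    case False
    with A obtain B where "resolves \<Delta>2 B" "entails (add_mset r A2) B"
      using candidate_right[of r A2] by blast
    with A show ?thesis
      by blast
  qed
qed

lemma valid_left_disjs_candidates: "valid \<Gamma>1 (\<Lambda>1 + {#disjs candidate_list#})"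
proof (rule validI)
  fix A assume "resolves \<Gamma>1 A"
  then obtain t where "t \<in> candidates" "entails A (add_mset t \<Lambda>1)"
    using candidate_left by blast
  then have "entails A (add_mset (disjs candidate_list) \<Lambda>1)"
    using set_candidate_list by (auto simp: entails_def sat_disjs)
  moreover have "resolves (\<Lambda>1 + {#disjs candidate_list#}) (add_mset (disjs candidate_list) \<Lambda>1)"
    using resolves_classicals_iff[of "\<Lambda>1 + {#disjs candidate_list#}"] classicals_\<Lambda>1
      set_candidate_list classical_candidate by (simp add: classical_disjs)
  ultimately show "\<exists>B. resolves (\<Lambda>1 + {#disjs candidate_list#}) B \<and> entails A B"
    by blast
qed

lemma valid_right_disjs_candidates:
  assumes "classicals \<Delta>2"
  shows "valid (\<Gamma>2 + {#disjs candidate_list#}) \<Delta>2"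
proof (rule validI)
  fix A assume "resolves (\<Gamma>2 + {#disjs candidate_list#}) A"
  then obtain A2 where A: "A = add_mset (disjs candidate_list) A2" "resolves \<Gamma>2 A2"
    using set_candidate_list classical_candidate
    by (auto simp: resolves_add_mset_iff resolutions_classical classical_disjs)
  have "entails A \<Delta>2"
    unfolding entails_def
  proof (intro allI impI)
    fix v assume "\<forall>a\<in>#A. sat v a"
    with A(1) obtain t where t: "t \<in> candidates" "sat v t" and "\<forall>a\<in>#A2. sat v a"
      using set_candidate_list by (auto simp: sat_disjs)
    obtain B where "resolves \<Delta>2 B" "entails (add_mset t A2) B"
      using candidate_right[OF t(1) A(2)] .
    with t(2) \<open>\<forall>a\<in>#A2. sat v a\<close> show "\<exists>b\<in>#\<Delta>2. sat v b"
      using resolves_classicals_iff[OF assms] by (auto simp: entails_def)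
  qed
  moreover have "resolves \<Delta>2 \<Delta>2"
    using resolves_classicals_iff[OF assms] by simp
  ultimately show "\<exists>B. resolves \<Delta>2 B \<and> entails A B"
    by blast
qed

lemma inquisitive_interpolant: "seq_interpolant \<Gamma>1 \<Gamma>2 \<Lambda>1 \<Delta>2 (idisjs candidate_list)"
proof (rule seq_interpolantI)
  show "wff (idisjs candidate_list)"
    using set_candidate_list classical_candidate classical_imp_wff by (auto simp: wff_idisjs)
  show "pvars i (idisjs candidate_list) \<subseteq> shared_vars i \<Gamma>1 \<Gamma>2 \<Lambda>1 \<Delta>2" for i
    using set_candidate_list pvars_candidate by (fastforce simp: pvars_idisjs)
qed (fact valid_left_idisjs_candidates valid_right_idisjs_candidates)+

lemma classical_interpolant:
  assumes "classicals \<Delta>2"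
  shows "classical (disjs candidate_list)" and "seq_interpolant \<Gamma>1 \<Gamma>2 \<Lambda>1 \<Delta>2 (disjs candidate_list)"
proof -
  show classical: "classical (disjs candidate_list)"
    using set_candidate_list classical_candidate by (simp add: classical_disjs)
  show "seq_interpolant \<Gamma>1 \<Gamma>2 \<Lambda>1 \<Delta>2 (disjs candidate_list)"
  proof (rule seq_interpolantI)
    show "wff (disjs candidate_list)"
      using classical by (rule classical_imp_wff)
    show "pvars i (disjs candidate_list) \<subseteq> shared_vars i \<Gamma>1 \<Gamma>2 \<Lambda>1 \<Delta>2" for i
      using set_candidate_list pvars_candidate by (fastforce simp: pvars_disjs)
  qed (fact valid_left_disjs_candidates valid_right_disjs_candidates[OF assms])+
qed

end

theorem theorem8p1:
  assumes "wffs \<Gamma>" and "wffs \<Delta>" and "GT \<Gamma> \<Delta>"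
  shows "\<forall>\<Gamma>1 \<Gamma>2 \<Lambda>1 \<Delta>2. \<Gamma> = \<Gamma>1 + \<Gamma>2 \<longrightarrow> \<Delta> = \<Lambda>1 + \<Delta>2 \<longrightarrow> classicals \<Lambda>1 \<longrightarrow>
           (\<exists>\<phi>. seq_interpolant \<Gamma>1 \<Gamma>2 \<Lambda>1 \<Delta>2 \<phi>) \<and>
           (classicals \<Delta>2 \<longrightarrow> (\<exists>\<phi>. classical \<phi> \<and> seq_interpolant \<Gamma>1 \<Gamma>2 \<Lambda>1 \<Delta>2 \<phi>))"
proof (intro allI impI)
  fix \<Gamma>1 \<Gamma>2 \<Lambda>1 \<Delta>2
  assume "\<Gamma> = \<Gamma>1 + \<Gamma>2" and "\<Delta> = \<Lambda>1 + \<Delta>2" and "classicals \<Lambda>1"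
  with assms have "valid_partition \<Gamma>1 \<Gamma>2 \<Lambda>1 \<Delta>2"
    by (simp add: valid_partition_def gt_imp_valid)
  then interpret valid_partition \<Gamma>1 \<Gamma>2 \<Lambda>1 \<Delta>2 .
  show "(\<exists>\<phi>. seq_interpolant \<Gamma>1 \<Gamma>2 \<Lambda>1 \<Delta>2 \<phi>) \<and>
      (classicals \<Delta>2 \<longrightarrow> (\<exists>\<phi>. classical \<phi> \<and> seq_interpolant \<Gamma>1 \<Gamma>2 \<Lambda>1 \<Delta>2 \<phi>))"
    using inquisitive_interpolant classical_interpolant by blast
qed

end
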